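(* Let $K$ be an $(\mathbb{F}_q,\mathbb{Z})$-field, $\mathcal{L}$ a language expanding $(D^{(2)},\{R_{n,m}\}_{n,m})$, and $\Delta$ a collection of functions order-definable in $\mathcal{L}$. Let $$C=\{(x,t)\in D\times K:\mathrm{ord}\,a_1(x)\ \square_1\ \mathrm{ord}(t-c(x))\ \square_2\ \mathrm{ord}\,a_2(x),\ t-c(x)\in\lambda Q_{n,m}\}\subseteq K^{k+1}$$ be an $(\mathcal{L},\Delta)$-cell. Suppose that for every $l\in\mathbb{N}$ the set $\{x\in K^k:\mathrm{ord}\,a_1(x)\equiv l\bmod n\}$ can be partitioned as a finite union of $(\mathcal{L},\Delta)$-precells. Then the projection $P=\{x\in K^k:\exists t\,(x,t)\in C\}$ can be partitioned into finitely many $(\mathcal{L},\Delta)$-precells.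
   Context: Let $K$ be an $(\mathbb{F}_q,\mathbb{Z})$-field: a valued field with residue field isomorphic to $\mathbb{F}_q$ and value group elementarily equivalent to $\mathbb{Z}$. Notation: $\mathrm{ord}$ is the valuation ($\mathrm{ord}\,0=+\infty$), $\mathcal{O}_K$ the valuation ring, $\mathcal{M}_K$ its maximal ideal, $\pi_K$ an element of smallest positive order; integers $\ell$ added to orders mean $\ell\cdot\mathrm{ord}\,\pi_K$. For $n>0$, $P_n$ is the set of nonzero $n$-th powers. For $m>0$, $\mathrm{ac}_m:K^\times\to(\mathcal{O}_K/\pi_K^m)^\times$ is the unique group homomorphism with $\mathrm{ac}_m(\pi_K)=1$ and $\mathrm{ac}_m(u)\equiv u\bmod \pi_K^m$ for units $u$. Put $Q_{n,m}=\{x\in P_n\cdot(1+\mathcal{M}_K^m):\mathrm{ac}_m(x)=1\}$ and $\lambda Q_{n,m}=\{\lambda t:t\in Q_{n,m}\}$ for $\lambda\in K$ (so $0\cdot Q_{n,m}=\{0\}$). Relations: $R_{n,m}(x,y,z)\Leftrightarrow y-x\in zQ_{n,m}$; $D^{(2)}(x,y)\Leftrightarrow \mathrm{ord}\,x<\mathrm{ord}\,y$. Definable means definable with parameters from $K$. A function $f:K^k\to K$ is order-definable in $\mathcal{L}$ if $\{(x,t):\mathrm{ord}\,f(x)<\mathrm{ord}\,t\}$ is $\mathcal{L}$-definable. Cells: let $\mathcal{L}$ expand $(D^{(2)},\{R_{n,m}\})$ and $\Delta=\bigcup_k\Delta_k$, $\Delta_k$ a set of functions $K^k\to K$. An $(\mathcal{L},\Delta)$-precell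 in $K^k$ is a set $\{x\in K^k:\phi(x)\}$ with $\phi$ a Boolean combination of conditions $\mathrm{ord}\,a_1(x)<\mathrm{ord}\,a_2(x)+\ell$ ($a_i\in\Delta_k$, $\ell\in\mathbb{Z}$) and $b_1(x)-b_2(x)\in\lambda Q_{n,m}$ ($b_i$ quantifier-free $\mathcal{L}$-definable functions, $\lambda\in K$). An $(\mathcal{L},\Delta)$-cell in $K^{k+1}$ is a set $\{(x,t)\in D\times K:\mathrm{ord}\,a_1(x)\ \square_1\ \mathrm{ord}(t-c(x))\ \square_2\ \mathrm{ord}\,a_2(x),\ t-c(x)\in\lambda Q_{n,m}\}$ with $D$ an $(\mathcal{L},\Delta)$-precell in $K^k$, $\lambda\in K$, $n,m>0$, $a_1,a_2\in\Delta_k$, each $\square_i$ either $<$ or "no condition", and center $c:K^k\to K$ quantifier-free $\mathcal{L}$-definable. *)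

theory Defs
  imports Main
begin

text \<open>A valuation is given by v :: 'a => 'g on nonzero elements (the value at 0 is
irrelevant; ord 0 = +infinity is handled explicitly below).\<close>

definition valuation :: "('a::field \<Rightarrow> 'g::linordered_ab_group_add) \<Rightarrow> bool" where
  "valuation v \<longleftrightarrow>
     (\<forall>x y. x \<noteq> 0 \<longrightarrow> y \<noteq> 0 \<longrightarrow> v (x * y) = v x + v y) \<and>
     (\<forall>x y. x \<noteq> 0 \<longrightarrow> y \<noteq> 0 \<longrightarrow> x + y \<noteq> 0 \<longrightarrow> min (v x) (v y) \<le> v (x + y)) \<and>
     (\<forall>\<gamma>. \<exists>x. x \<noteq> 0 \<and> v x = \<gamma>)"

definition val_ring :: "('a::field \<Rightarrow> 'g::linordered_ab_group_add) \<Rightarrow> 'a set" where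
  "val_ring v = {x. x = 0 \<or> 0 \<le> v x}"

definition max_ideal :: "('a::field \<Rightarrow> 'g::linordered_ab_group_add) \<Rightarrow> 'a set" where
  "max_ideal v = {x. x = 0 \<or> 0 < v x}"

definition max_ideal_pow :: "('a::field \<Rightarrow> 'g::linordered_ab_group_add) \<Rightarrow> 'a \<Rightarrow> nat \<Rightarrow> 'a set" where
  "max_ideal_pow v \<pi> m = {x. x = 0 \<or> v (\<pi> ^ m) \<le> v x}"

definition residue_field :: "('a::field \<Rightarrow> 'g::linordered_ab_group_add) \<Rightarrow> 'a set set" where
  "residue_field v = (\<lambda>x. {y \<in> val_ring v. x - y \<in> max_ideal v}) ` val_ring v"

definition uniformizer :: "('a::field \<Rightarrow> 'g::linordered_ab_group_add) \<Rightarrow> 'a \<Rightarrow> bool" where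
  "uniformizer v \<pi> \<longleftrightarrow> \<pi> \<noteq> 0 \<and> 0 < v \<pi> \<and> (\<forall>x. x \<noteq> 0 \<longrightarrow> 0 < v x \<longrightarrow> v \<pi> \<le> v x)"

text \<open>(F_q,Z)-field: residue field has exactly q elements (hence is isomorphic to F_q),
 value group is a Z-group (discretely ordered abelian group with least positive
 element v pi such that every element is congruent modulo n to r * v pi, 0 <= r < n;
 these are exactly the ordered abelian groups elementarily equivalent to Z).\<close>
definition FqZ_field :: "nat \<Rightarrow> ('a::field \<Rightarrow> 'g::linordered_ab_group_add) \<Rightarrow> 'a \<Rightarrow> bool" where
  "FqZ_field q v \<pi> \<longleftrightarrow>
     valuation v \<and> uniformizer v \<pi> \<and>
     finite (residue_field v) \<and> card (residue_field v) = q \<and>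
     (\<forall>n::nat. 0 < n \<longrightarrow> (\<forall>x. x \<noteq> 0 \<longrightarrow>
        (\<exists>r<n. \<exists>y. y \<noteq> 0 \<and> v x = v (\<pi> ^ r * y ^ n))))"

text \<open>ord x < ord y, with ord 0 = +infinity.\<close>
definition ord_less :: "('a::field \<Rightarrow> 'g::linordered_ab_group_add) \<Rightarrow> 'a \<Rightarrow> 'a \<Rightarrow> bool" where
  "ord_less v x y \<longleftrightarrow> x \<noteq> 0 \<and> (y = 0 \<or> v x < v y)"

definition cong_pi :: "('a::field \<Rightarrow> 'g::linordered_ab_group_add) \<Rightarrow> 'a \<Rightarrow> nat \<Rightarrow> 'a \<Rightarrow> 'a \<Rightarrow> bool" where
  "cong_pi v \<pi> m x y \<longleftrightarrow> x - y \<in> max_ideal_pow v \<pi> m"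

text \<open>ac is a group homomorphism K^x -> (O/pi^m)^x, represented by unit
representatives modulo pi^m, with ac(pi) = 1 and ac(u) = u mod pi^m for units u.\<close>
definition ac_spec :: "('a::field \<Rightarrow> 'g::linordered_ab_group_add) \<Rightarrow> 'a \<Rightarrow> nat \<Rightarrow> ('a \<Rightarrow> 'a) \<Rightarrow> bool" where
  "ac_spec v \<pi> m ac \<longleftrightarrow>
     (\<forall>x. x \<noteq> 0 \<longrightarrow> ac x \<noteq> 0 \<and> v (ac x) = 0) \<and>
     (\<forall>x y. x \<noteq> 0 \<longrightarrow> y \<noteq> 0 \<longrightarrow> cong_pi v \<pi> m (ac (x * y)) (ac x * ac y)) \<and>
     cong_pi v \<pi> m (ac \<pi>) 1 \<and>
     (\<forall>u. u \<noteq> 0 \<longrightarrow> v u = 0 \<longrightarrow> cong_pi v \<pi> m (ac u) u)"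

definition ac :: "('a::field \<Rightarrow> 'g::linordered_ab_group_add) \<Rightarrow> 'a \<Rightarrow> nat \<Rightarrow> 'a \<Rightarrow> 'a" where
  "ac v \<pi> m = (SOME f. ac_spec v \<pi> m f)"

definition Q_set :: "('a::field \<Rightarrow> 'g::linordered_ab_group_add) \<Rightarrow> 'a \<Rightarrow> nat \<Rightarrow> nat \<Rightarrow> 'a set" where
  "Q_set v \<pi> n m = {x. x \<noteq> 0 \<and>
      (\<exists>y z. y \<noteq> 0 \<and> z \<in> max_ideal_pow v \<pi> m \<and> x = y ^ n * (1 + z)) \<and>
      cong_pi v \<pi> m (ac v \<pi> m x) 1}"

definition lamQ :: "('a::field \<Rightarrow> 'g::linordered_ab_group_add) \<Rightarrow> 'a \<Rightarrow> 'a \<Rightarrow> nat \<Rightarrow> nat \<Rightarrow> 'a set" where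
  "lamQ v \<pi> lam n m = (\<lambda>t. lam * t) ` Q_set v \<pi> n m"

definition D2_rel :: "('a::field \<Rightarrow> 'g::linordered_ab_group_add) \<Rightarrow> 'a list \<Rightarrow> bool" where
  "D2_rel v xs \<longleftrightarrow> length xs = 2 \<and> ord_less v (xs ! 0) (xs ! 1)"

definition R_rel :: "('a::field \<Rightarrow> 'g::linordered_ab_group_add) \<Rightarrow> 'a \<Rightarrow> nat \<Rightarrow> nat \<Rightarrow> 'a list \<Rightarrow> bool" where
  "R_rel v \<pi> n m xs \<longleftrightarrow> length xs = 3 \<and> xs ! 1 - xs ! 0 \<in> lamQ v \<pi> (xs ! 2) n m"

text \<open>A language on K is given by a set of basic relations Rels and a set of basic
functions Funs (interpreted directly as functions on tuples).\<close>

datatype (dead 'a) tm = Var nat | Par 'a | Fn "'a list \<Rightarrow> 'a" "'a tm list"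

datatype (dead 'a) fm = Eq "'a tm" "'a tm" | Rl "'a list \<Rightarrow> bool" "'a tm list"
  | Neg "'a fm" | Conj "'a fm" "'a fm" | Ex nat "'a fm"

fun evt :: "(nat \<Rightarrow> 'a) \<Rightarrow> 'a tm \<Rightarrow> 'a" where
  "evt e (Var i) = e i"
| "evt e (Par a) = a"
| "evt e (Fn f ts) = f (map (evt e) ts)"

fun sat :: "(nat \<Rightarrow> 'a) \<Rightarrow> 'a fm \<Rightarrow> bool" where
  "sat e (Eq s t) = (evt e s = evt e t)"
| "sat e (Rl R ts) = R (map (evt e) ts)"
| "sat e (Neg \<phi>) = (\<not> sat e \<phi>)"
| "sat e (Conj \<phi> \<psi>) = (sat e \<phi> \<and> sat e \<psi>)"
| "sat e (Ex i \<phi>) = (\<exists>a. sat (e(i := a)) \<phi>)"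

fun tm_in :: "('a list \<Rightarrow> 'a) set \<Rightarrow> 'a tm \<Rightarrow> bool" where
  "tm_in Fs (Var i) = True"
| "tm_in Fs (Par a) = True"
| "tm_in Fs (Fn f ts) = (f \<in> Fs \<and> (\<forall>t\<in>set ts. tm_in Fs t))"

fun fm_in :: "('a list \<Rightarrow> bool) set \<Rightarrow> ('a list \<Rightarrow> 'a) set \<Rightarrow> 'a fm \<Rightarrow> bool" where
  "fm_in Rs Fs (Eq s t) = (tm_in Fs s \<and> tm_in Fs t)"
| "fm_in Rs Fs (Rl R ts) = (R \<in> Rs \<and> (\<forall>t\<in>set ts. tm_in Fs t))"
| "fm_in Rs Fs (Neg \<phi>) = fm_in Rs Fs \<phi>"
| "fm_in Rs Fs (Conj \<phi> \<psi>) = (fm_in Rs Fs \<phi> \<and> fm_in Rs Fs \<psi>)"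
| "fm_in Rs Fs (Ex i \<phi>) = fm_in Rs Fs \<phi>"

fun qfree :: "'a fm \<Rightarrow> bool" where
  "qfree (Eq s t) = True"
| "qfree (Rl R ts) = True"
| "qfree (Neg \<phi>) = qfree \<phi>"
| "qfree (Conj \<phi> \<psi>) = (qfree \<phi> \<and> qfree \<psi>)"
| "qfree (Ex i \<phi>) = False"

text \<open>Variable i is the i-th coordinate of the tuple; other variables are set to 0
(which is harmless since parameters are allowed).\<close>
definition env :: "'a::zero list \<Rightarrow> nat \<Rightarrow> 'a" where
  "env xs i = (if i < length xs then xs ! i else 0)"

text \<open>Subsets of K^k are represented as sets of lists of length k.\<close>
definition definable :: "('a::zero list \<Rightarrow> bool) set \<Rightarrow> ('a list \<Rightarrow> 'a) set \<Rightarrow> nat \<Rightarrow> 'a list set \<Rightarrow> bool" where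
  "definable Rs Fs k S \<longleftrightarrow>
     (\<exists>\<phi>. fm_in Rs Fs \<phi> \<and> S = {xs. length xs = k \<and> sat (env xs) \<phi>})"

definition qf_definable :: "('a::zero list \<Rightarrow> bool) set \<Rightarrow> ('a list \<Rightarrow> 'a) set \<Rightarrow> nat \<Rightarrow> 'a list set \<Rightarrow> bool" where
  "qf_definable Rs Fs k S \<longleftrightarrow>
     (\<exists>\<phi>. fm_in Rs Fs \<phi> \<and> qfree \<phi> \<and> S = {xs. length xs = k \<and> sat (env xs) \<phi>})"

definition qf_def_fun :: "('a::zero list \<Rightarrow> bool) set \<Rightarrow> ('a list \<Rightarrow> 'a) set \<Rightarrow> nat \<Rightarrow> ('a list \<Rightarrow> 'a) \<Rightarrow> bool" where
  "qf_def_fun Rs Fs k f \<longleftrightarrow> qf_definable Rs Fs (Suc k) {xs @ [f xs] | xs. length xs = k}"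

definition order_definable :: "('a::field \<Rightarrow> 'g::linordered_ab_group_add) \<Rightarrow> ('a list \<Rightarrow> bool) set \<Rightarrow> ('a list \<Rightarrow> 'a) set \<Rightarrow> nat \<Rightarrow> ('a list \<Rightarrow> 'a) \<Rightarrow> bool" where
  "order_definable v Rs Fs k f \<longleftrightarrow>
     definable Rs Fs (Suc k) {xs @ [t] | xs t. length xs = k \<and> ord_less v (f xs) t}"

definition expands_base :: "('a::field \<Rightarrow> 'g::linordered_ab_group_add) \<Rightarrow> 'a \<Rightarrow> ('a list \<Rightarrow> bool) set \<Rightarrow> bool" where
  "expands_base v \<pi> Rs \<longleftrightarrow> D2_rel v \<in> Rs \<and> (\<forall>n m. 0 < n \<longrightarrow> 0 < m \<longrightarrow> R_rel v \<pi> n m \<in> Rs)"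

inductive_set bool_comb :: "'b set \<Rightarrow> 'b set set \<Rightarrow> 'b set set" for U A where
  atom: "S \<in> A \<Longrightarrow> S \<in> bool_comb U A"
| top: "U \<in> bool_comb U A"
| compl: "S \<in> bool_comb U A \<Longrightarrow> U - S \<in> bool_comb U A"
| inter: "S \<in> bool_comb U A \<Longrightarrow> T \<in> bool_comb U A \<Longrightarrow> S \<inter> T \<in> bool_comb U A"

definition precell_atoms ::
  "('a::field \<Rightarrow> 'g::linordered_ab_group_add) \<Rightarrow> 'a \<Rightarrow> ('a list \<Rightarrow> bool) set \<Rightarrow> ('a list \<Rightarrow> 'a) set
   \<Rightarrow> (nat \<Rightarrow> ('a list \<Rightarrow> 'a) set) \<Rightarrow> nat \<Rightarrow> 'a list set set" where
  "precell_atoms v \<pi> Rs Fs \<Delta> k =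
     {{x. length x = k \<and> ord_less v (a1 x) (\<pi> powi l * a2 x)} | a1 a2 l.
         a1 \<in> \<Delta> k \<and> a2 \<in> \<Delta> k}
   \<union> {{x. length x = k \<and> b1 x - b2 x \<in> lamQ v \<pi> lam n m} | b1 b2 lam n m.
         qf_def_fun Rs Fs k b1 \<and> qf_def_fun Rs Fs k b2 \<and> 0 < n \<and> 0 < m}"

definition precell ::
  "('a::field \<Rightarrow> 'g::linordered_ab_group_add) \<Rightarrow> 'a \<Rightarrow> ('a list \<Rightarrow> bool) set \<Rightarrow> ('a list \<Rightarrow> 'a) set
   \<Rightarrow> (nat \<Rightarrow> ('a list \<Rightarrow> 'a) set) \<Rightarrow> nat \<Rightarrow> 'a list set \<Rightarrow> bool" where
  "precell v \<pi> Rs Fs \<Delta> k S \<longleftrightarrow> S \<in> bool_comb {x. length x = k} (precell_atoms v \<pi> Rs Fs \<Delta> k)"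

text \<open>The cell with base D, bounds a1, a2 (box_i = True means the condition
 "<" is imposed, False means no condition), center c, coset lambda Q_{n,m}.\<close>
definition cell_set ::
  "('a::field \<Rightarrow> 'g::linordered_ab_group_add) \<Rightarrow> 'a \<Rightarrow> nat \<Rightarrow> 'a list set \<Rightarrow> ('a list \<Rightarrow> 'a)
   \<Rightarrow> bool \<Rightarrow> ('a list \<Rightarrow> 'a) \<Rightarrow> bool \<Rightarrow> ('a list \<Rightarrow> 'a) \<Rightarrow> 'a \<Rightarrow> nat \<Rightarrow> nat \<Rightarrow> 'a list set" where
  "cell_set v \<pi> k D a1 box1 c box2 a2 lam n m =
     {x @ [t] | x t. length x = k \<and> x \<in> D \<and>
        (box1 \<longrightarrow> ord_less v (a1 x) (t - c x)) \<and>
        (box2 \<longrightarrow> ord_less v (t - c x) (a2 x)) \<and>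
        t - c x \<in> lamQ v \<pi> lam n m}"

definition finite_precell_partition ::
  "('a::field \<Rightarrow> 'g::linordered_ab_group_add) \<Rightarrow> 'a \<Rightarrow> ('a list \<Rightarrow> bool) set \<Rightarrow> ('a list \<Rightarrow> 'a) set
   \<Rightarrow> (nat \<Rightarrow> ('a list \<Rightarrow> 'a) set) \<Rightarrow> nat \<Rightarrow> 'a list set \<Rightarrow> bool" where
  "finite_precell_partition v \<pi> Rs Fs \<Delta> k S \<longleftrightarrow>
     (\<exists>Ps. finite Ps \<and> (\<forall>P\<in>Ps. precell v \<pi> Rs Fs \<Delta> k P) \<and> pairwise disjnt Ps \<and> \<Union>Ps = S)"

end

theory Submission
  imports Defs
begin

(* The projection of the cell C with base D is the set of x in D over which the coset
   lam Q_{n,m} (shifted by the center c(x)) meets the order conditions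
   ord a1(x) < ord t < ord a2(x), each bound being optional.  We decide this
   pointwise from the values taken on lam Q_{n,m}:
   - the values of Q_{n,m} form exactly the subgroup n G of the value group; the
     nontrivial half (every n-th multiple is attained) needs the angular component
     map ac_m, whose existence we derive from the finiteness of O/pi^m and the
     Z-group structure of G (units to a fixed power are 1 modulo pi^m);
   - with lam = 0 or at most one bound the condition only says whether a1(x) vanishes;
   - with both bounds and lam \<noteq> 0, if ord lam \<equiv> r and ord a1(x) \<equiv> l (mod n), the
     condition is ord a1(x) < ord a2(x) - d(l) with 0 < d(l) \<le> n, l + d(l) \<equiv> r. *)

locale valued_field =
  fixes v :: "'a::field \<Rightarrow> 'g::linordered_ab_group_add" and \<pi> :: 'a
  assumes val: "valuation v" and unif: "uniformizer v \<pi>"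
begin

lemma v_mult [simp]: "x \<noteq> 0 \<Longrightarrow> y \<noteq> 0 \<Longrightarrow> v (x * y) = v x + v y"
  using val unfolding valuation_def by blast

lemma v_ultrametric: "x \<noteq> 0 \<Longrightarrow> y \<noteq> 0 \<Longrightarrow> x + y \<noteq> 0 \<Longrightarrow> min (v x) (v y) \<le> v (x + y)"
  using val unfolding valuation_def by blast

lemma pi_nonzero [simp]: "\<pi> \<noteq> 0" and v_pi_pos: "0 < v \<pi>"
  using unif unfolding uniformizer_def by auto

lemma v_pi_least: "x \<noteq> 0 \<Longrightarrow> 0 < v x \<Longrightarrow> v \<pi> \<le> v x"
  using unif unfolding uniformizer_def by auto

lemma v_one [simp]: "v 1 = 0"
  using v_mult[of 1 1] by simp

lemma v_inverse [simp]: "x \<noteq> 0 \<Longrightarrow> v (inverse x) = - v x"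
  using v_mult[of x "inverse x"] by (simp add: eq_neg_iff_add_eq_0 add.commute)

lemma v_divide [simp]: "x \<noteq> 0 \<Longrightarrow> y \<noteq> 0 \<Longrightarrow> v (x / y) = v x - v y"
  by (simp add: divide_inverse)

lemma v_minus [simp]: "v (- x) = v x"
proof (cases "x = 0")
  case False
  have "v (-1) + v (-1) = 0" using v_mult[of "-1" "-1"] by simp
  then have "v (-1) = 0" by (metis add_neg_neg add_pos_pos less_irrefl linorder_neqE)
  then show ?thesis using False v_mult[of "-1" x] by simp
qed simp

lemma v_add_strict:
  assumes "x \<noteq> 0" "y \<noteq> 0" "v x < v y" shows "x + y \<noteq> 0" "v (x + y) = v x"
proof -
  show nz: "x + y \<noteq> 0"
    using assms by (metis add_eq_0_iff v_minus less_irrefl)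
  have "min (v (x + y)) (v (- y)) \<le> v ((x + y) + (- y))"
    using v_ultrametric[of "x + y" "- y"] nz assms by simp
  then have "v (x + y) \<le> v x"
    using assms(3) by (auto simp: min_le_iff_disj)
  moreover have "v x \<le> v (x + y)" using v_ultrametric[OF assms(1,2) nz] assms(3) by simp
  ultimately show "v (x + y) = v x" by simp
qed

lemma v_power_nonneg: "x \<noteq> 0 \<Longrightarrow> 0 \<le> v x \<Longrightarrow> 0 \<le> v (x ^ n)"
  by (induction n) (simp_all add: add_nonneg_nonneg)

lemma v_power_zero: "x \<noteq> 0 \<Longrightarrow> v x = 0 \<Longrightarrow> v (x ^ n) = 0"
  by (induction n) simp_all

lemma v_power_mono: "x \<noteq> 0 \<Longrightarrow> y \<noteq> 0 \<Longrightarrow> v x \<le> v y \<Longrightarrow> v (x ^ n) \<le> v (y ^ n)"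
  by (induction n) (simp_all add: add_mono)

lemma v_power_pos: "x \<noteq> 0 \<Longrightarrow> 0 < v x \<Longrightarrow> 0 < n \<Longrightarrow> 0 < v (x ^ n)"
proof (induction n)
  case (Suc n)
  then show ?case using v_power_nonneg[of x n] by (simp add: add_pos_nonneg)
qed simp

lemma v_power_neg: "x \<noteq> 0 \<Longrightarrow> v x < 0 \<Longrightarrow> 0 < n \<Longrightarrow> v (x ^ n) < 0"
  using v_power_pos[of "inverse x" n] by (simp add: power_inverse)

lemma v_power_unit: "y \<noteq> 0 \<Longrightarrow> v (y ^ n) = 0 \<Longrightarrow> 0 < n \<Longrightarrow> v y = 0"
  using v_power_pos[of y n] v_power_neg[of y n] by (metis less_irrefl linorder_neqE)

lemma v_pi_power_less: "a < b \<Longrightarrow> v (\<pi> ^ a) < v (\<pi> ^ b)"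
proof -
  assume "a < b"
  then have "\<pi> ^ b = \<pi> ^ a * \<pi> ^ (b - a)" by (simp flip: power_add)
  moreover have "0 < v (\<pi> ^ (b - a))" using v_power_pos[of \<pi> "b - a"] v_pi_pos \<open>a < b\<close> by simp
  ultimately show ?thesis by simp
qed

lemma v_pi_power_pos: "0 < d \<Longrightarrow> 0 < v (\<pi> ^ d)"
  using v_power_pos[of \<pi> d] v_pi_pos by simp

text \<open>For 0 < d < n the value of pi^d is not an n-th multiple: it lies strictly
  between the consecutive multiples 0 and n v pi.\<close>
lemma v_pi_power_not_nth: assumes "0 < d" "d < n" "w \<noteq> 0" shows "v (\<pi> ^ d) \<noteq> v (w ^ n)"
proof (cases "0 < v w")
  case True
  then have "v (\<pi> ^ n) \<le> v (w ^ n)" using v_pi_least v_power_mono assms by simp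
  moreover have "v (\<pi> ^ d) < v (\<pi> ^ n)" using v_pi_power_less assms by simp
  ultimately show ?thesis by simp
next
  case False
  then have "v (w ^ n) \<le> 0"
    using v_power_neg[of w n] v_power_zero[of w n] assms by (cases "v w < 0") (auto simp: not_less)
  moreover have "0 < v (\<pi> ^ d)" using v_pi_power_pos assms by simp
  ultimately show ?thesis by simp
qed

lemma residue_unique:
  assumes "r < n" "r' < n" "y \<noteq> 0" "y' \<noteq> 0"
    and eq: "v (\<pi> ^ r * y ^ n) = v (\<pi> ^ r' * y' ^ n)"
  shows "r = r' \<and> v y = v y'"
proof -
  have one_sided: "r = r' \<and> v y = v y'"
    if le: "r' \<le> r" and "r < n" "y \<noteq> 0" "y' \<noteq> 0" and eq: "v (\<pi> ^ r * y ^ n) = v (\<pi> ^ r' * y' ^ n)"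
    for r r' y y'
  proof -
    have "\<pi> ^ r = \<pi> ^ r' * \<pi> ^ (r - r')" using le by (simp flip: power_add)
    then have "v (\<pi> ^ r') + v (\<pi> ^ (r - r')) + v (y ^ n) = v (\<pi> ^ r') + v (y' ^ n)"
      using eq that by (simp add: add.assoc)
    then have quot: "v (\<pi> ^ (r - r')) = v ((y' / y) ^ n)"
      using that by (simp add: power_divide algebra_simps)
    then have "r = r'"
      using v_pi_power_not_nth[of "r - r'" n "y' / y"] that by fastforce
    then have "v (y' / y) = 0" using v_power_unit[of "y' / y" n] quot that by simp
    then show ?thesis using \<open>r = r'\<close> that by simp
  qed
  show ?thesis
    using one_sided[of r' r y y'] one_sided[of r r' y' y] assms by (cases "r' \<le> r") auto
qed

end

context valued_field begin

abbreviation ideal_pow :: "nat \<Rightarrow> 'a set" ("\<I>") where "\<I> m \<equiv> max_ideal_pow v \<pi> m"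
abbreviation val_ring_v :: "'a set" ("\<O>") where "\<O> \<equiv> val_ring v"
abbreviation cong_mod :: "nat \<Rightarrow> 'a \<Rightarrow> 'a \<Rightarrow> bool" where "cong_mod m a b \<equiv> cong_pi v \<pi> m a b"

lemma in_ideal_pow: "x \<in> \<I> m \<longleftrightarrow> x = 0 \<or> v (\<pi> ^ m) \<le> v x"
  by (simp add: max_ideal_pow_def)

lemma in_val_ring: "x \<in> \<O> \<longleftrightarrow> x = 0 \<or> 0 \<le> v x"
  by (simp add: val_ring_def)

lemma ideal_pow_zero [simp]: "0 \<in> \<I> m"
  by (simp add: in_ideal_pow)

lemma ideal_pow_add: assumes "a \<in> \<I> m" "b \<in> \<I> m" shows "a + b \<in> \<I> m"
proof (cases "a = 0 \<or> b = 0 \<or> a + b = 0")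
  case False
  then have "min (v a) (v b) \<le> v (a + b)" using v_ultrametric by auto
  moreover have "v (\<pi> ^ m) \<le> v a" "v (\<pi> ^ m) \<le> v b" using assms False by (auto simp: in_ideal_pow)
  ultimately show ?thesis by (auto simp: in_ideal_pow min_le_iff_disj intro: order_trans)
qed (use assms in auto)

lemma ideal_pow_uminus: "a \<in> \<I> m \<Longrightarrow> - a \<in> \<I> m"
  by (auto simp: in_ideal_pow)

lemma ideal_pow_diff: "a \<in> \<I> m \<Longrightarrow> b \<in> \<I> m \<Longrightarrow> a - b \<in> \<I> m"
  using ideal_pow_add[of a m "- b"] ideal_pow_uminus by simp

lemma ideal_pow_mult: assumes "a \<in> \<I> m" "c \<in> \<O>" shows "c * a \<in> \<I> m"
proof (cases "a = 0 \<or> c = 0")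
  case False
  then have "v (\<pi> ^ m) \<le> v c + v a"
    using assms by (auto simp: in_ideal_pow in_val_ring intro: add_increasing)
  then show ?thesis using False by (simp add: in_ideal_pow)
qed auto

lemma val_ring_mult: "a \<in> \<O> \<Longrightarrow> b \<in> \<O> \<Longrightarrow> a * b \<in> \<O>"
  by (cases "a = 0 \<or> b = 0") (auto simp: in_val_ring add_nonneg_nonneg)

lemma val_ring_unit: "v w = 0 \<Longrightarrow> w \<in> \<O>"
  by (simp add: in_val_ring)

lemma val_ring_power: "a \<in> \<O> \<Longrightarrow> a ^ n \<in> \<O>"
  by (induction n) (auto intro: val_ring_mult simp: in_val_ring)

lemma ideal_pow_0: "\<I> 0 = \<O>"
  by (auto simp: in_ideal_pow in_val_ring)

lemma max_ideal_sub_ideal_pow_1: "max_ideal v \<subseteq> \<I> 1"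
  using v_pi_least by (auto simp: max_ideal_def in_ideal_pow) (meson not_le)

lemma cong_mod_iff: "cong_mod m a b \<longleftrightarrow> a - b \<in> \<I> m"
  by (simp add: cong_pi_def)

lemma cong_mod_sym: "cong_mod m a b \<Longrightarrow> cong_mod m b a"
  using ideal_pow_uminus by (fastforce simp: cong_mod_iff)

lemma cong_mod_trans: "cong_mod m a b \<Longrightarrow> cong_mod m b c \<Longrightarrow> cong_mod m a c"
  using ideal_pow_add by (fastforce simp: cong_mod_iff)

lemma cong_mod_mult:
  assumes "cong_mod m a b" "cong_mod m c d" "b \<in> \<O>" "c \<in> \<O>" shows "cong_mod m (a * c) (b * d)"
proof -
  have "a * c - b * d = c * (a - b) + b * (c - d)" by (simp add: algebra_simps)
  then show ?thesis using assms ideal_pow_mult ideal_pow_add by (simp add: cong_mod_iff)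
qed

lemma cong_mod_power_one: assumes "cong_mod m a 1" "a \<in> \<O>" shows "cong_mod m (a ^ n) 1"
proof (induction n)
  case (Suc n)
  then show ?case using cong_mod_mult[OF assms(1) Suc] assms(2) val_ring_power[OF assms(2), of n]
    by (simp add: in_val_ring)
qed (simp add: cong_mod_iff)

lemma cong_mod_cancel:
  assumes "cong_mod m (a * w) (b * w)" "w \<noteq> 0" "v w = 0" shows "cong_mod m a b"
proof -
  have "inverse w * (a * w - b * w) \<in> \<I> m"
    using assms ideal_pow_mult[of _ m "inverse w"] by (simp add: cong_mod_iff in_val_ring)
  moreover have "inverse w * (a * w - b * w) = a - b" using assms(2) by (simp add: field_simps)
  ultimately show ?thesis by (simp add: cong_mod_iff)
qed

end

text \<open>Here O/pi^m is finite, which forces a uniform power of the units to be 1 modulo pi^m;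
  this is what makes an angular component map ac_m exist.\<close>

locale zgroup_valued_field = valued_field +
  assumes zgroup: "\<And>n x. 0 < n \<Longrightarrow> x \<noteq> 0 \<Longrightarrow> \<exists>r<n. \<exists>y. y \<noteq> 0 \<and> v x = v (\<pi> ^ r * y ^ n)"
    and finite_residue_field: "finite (residue_field v)"
begin

lemma residue_representatives:
  "\<exists>R. finite R \<and> R \<subseteq> \<O> \<and> (\<forall>x\<in>\<O>. \<exists>r\<in>R. x - r \<in> max_ideal v)"
proof -
  define cls where "cls x = {y \<in> \<O>. x - y \<in> max_ideal v}" for x
  have "residue_field v = cls ` \<O>" by (simp add: residue_field_def cls_def)
  then obtain R where R: "R \<subseteq> \<O>" "finite R" "cls ` \<O> = cls ` R"
    using finite_subset_image[of "residue_field v" cls \<O>] finite_residue_field by auto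
  have "\<exists>r\<in>R. x - r \<in> max_ideal v" if x: "x \<in> \<O>" for x
  proof -
    obtain r where r: "r \<in> R" "cls x = cls r" using R(3) x by (metis imageE image_eqI)
    have "x \<in> cls x" using x by (simp add: cls_def max_ideal_def)
    then have "x \<in> cls r" using r by simp
    then have "r - x \<in> max_ideal v" by (simp add: cls_def)
    then have "x - r \<in> max_ideal v" using v_minus[of "r - x"] by (auto simp: max_ideal_def)
    then show ?thesis using r by blast
  qed
  then show ?thesis using R by blast
qed

text \<open>O/pi^m is finite: built digit by digit from residue representatives.\<close>
lemma ideal_pow_representatives: "\<exists>F. finite F \<and> (\<forall>x\<in>\<O>. \<exists>f\<in>F. x - f \<in> \<I> m)"
proof (induction m)
  case 0
  then show ?case using ideal_pow_0 by (intro exI[of _ "{0}"]) auto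
next
  case (Suc m)
  then obtain F where F: "finite F" "\<forall>x\<in>\<O>. \<exists>f\<in>F. x - f \<in> \<I> m" by blast
  obtain R where R: "finite R" "R \<subseteq> \<O>" "\<forall>x\<in>\<O>. \<exists>r\<in>R. x - r \<in> max_ideal v"
    using residue_representatives by blast
  define G where "G = (\<lambda>(f, r). f + r * \<pi> ^ m) ` (F \<times> R)"
  have "\<exists>g\<in>G. x - g \<in> \<I> (Suc m)" if x: "x \<in> \<O>" for x
  proof -
    obtain f where f: "f \<in> F" "x - f \<in> \<I> m" using F x by blast
    define e where "e = (x - f) / \<pi> ^ m"
    have "e \<in> \<O>"
    proof (cases "x - f = 0")
      case False
      then have "v (\<pi> ^ m) \<le> v (x - f)" using f by (simp add: in_ideal_pow)
      then show ?thesis using False by (simp add: in_val_ring e_def)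
    qed (simp add: e_def in_val_ring)
    then obtain r where r: "r \<in> R" "e - r \<in> \<I> 1"
      using R max_ideal_sub_ideal_pow_1 by blast
    have "\<pi> ^ m * (e - r) \<in> \<I> (Suc m)"
    proof (cases "e - r = 0")
      case False
      then have "v (\<pi> ^ m) + v \<pi> \<le> v (\<pi> ^ m) + v (e - r)" using r by (simp add: in_ideal_pow)
      then show ?thesis using False by (simp add: in_ideal_pow add.commute)
    qed simp
    moreover have "x - (f + r * \<pi> ^ m) = \<pi> ^ m * (e - r)" by (simp add: e_def field_simps)
    moreover have "f + r * \<pi> ^ m \<in> G" using f r by (force simp: G_def)
    ultimately show ?thesis by (intro bexI[of _ "f + r * \<pi> ^ m"]) simp_all
  qed
  moreover have "finite G" using F(1) R(1) by (simp add: G_def)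
  ultimately show ?case by blast
qed

text \<open>By the pigeonhole principle in the finite ring O/pi^m, some fixed power of every
  unit is congruent to 1 modulo pi^m.\<close>
lemma unit_power_cong_one: "\<exists>N>0. \<forall>w. w \<noteq> 0 \<longrightarrow> v w = 0 \<longrightarrow> cong_mod m (w ^ N) 1"
proof -
  obtain F where F: "finite F" "\<forall>x\<in>\<O>. \<exists>f\<in>F. x - f \<in> \<I> m"
    using ideal_pow_representatives by blast
  define C where "C = card F"
  have "cong_mod m (w ^ fact C) 1" if w: "w \<noteq> 0" "v w = 0" for w
  proof -
    have w_pow: "w ^ i \<in> \<O>" "v (w ^ i) = 0" for i
      using w v_power_zero[of w i] by (simp_all add: in_val_ring)
    have "\<forall>i. \<exists>f. f \<in> F \<and> w ^ i - f \<in> \<I> m" using F(2) w_pow(1) by blast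
    then obtain g where g: "\<And>i. g i \<in> F \<and> w ^ i - g i \<in> \<I> m" by metis
    have "card (g ` {..C}) \<le> C" using g F(1) card_mono C_def by (metis image_subsetI)
    then have "\<not> inj_on g {..C}" using pigeonhole[of g "{..C}"] by simp
    then obtain a b where ab: "a < b" "b \<le> C" "g a = g b"
      unfolding inj_on_def by (metis atMost_iff linorder_neqE)
    have "w ^ b - w ^ a = (w ^ (b - a) - 1) * w ^ a"
      using ab by (simp add: algebra_simps flip: power_add)
    moreover have "w ^ b - w ^ a \<in> \<I> m" using g[of a] g[of b] ab ideal_pow_diff by fastforce
    ultimately have "cong_mod m (w ^ (b - a) * w ^ a) (1 * w ^ a)"
      by (simp add: cong_mod_iff algebra_simps)
    then have period: "cong_mod m (w ^ (b - a)) 1"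
      using cong_mod_cancel w_pow w by simp
    have "(b - a) dvd fact C" using ab by (intro dvd_fact) auto
    then obtain e where "fact C = (b - a) * e" by blast
    then show ?thesis using cong_mod_power_one[OF period w_pow(1)] by (simp add: power_mult)
  qed
  then show ?thesis using fact_gt_zero[of C] by blast
qed

lemma unit_factorization:
  assumes "0 < N" "x \<noteq> 0" shows "\<exists>r y u. y \<noteq> 0 \<and> u \<noteq> 0 \<and> v u = 0 \<and> x = \<pi> ^ r * y ^ N * u"
proof -
  obtain r y where y: "y \<noteq> 0" "v x = v (\<pi> ^ r * y ^ N)" using zgroup[OF assms] by blast
  define u where "u = x / (\<pi> ^ r * y ^ N)"
  have "u \<noteq> 0" "v u = 0" "x = \<pi> ^ r * y ^ N * u"
    using y assms by (simp_all add: u_def)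
  then show ?thesis using y by blast
qed

lemma unit_part_cong:
  assumes N: "0 < N" "\<And>w. w \<noteq> 0 \<Longrightarrow> v w = 0 \<Longrightarrow> cong_mod m (w ^ N) 1"
    and eq: "\<pi> ^ R * y ^ N * u = \<pi> ^ R' * y' ^ N * u'"
    and nz: "y \<noteq> 0" "y' \<noteq> 0" "u \<noteq> 0" "u' \<noteq> 0" and units: "v u = 0" "v u' = 0"
  shows "cong_mod m u' u"
proof -
  have reduce: "\<pi> ^ R * y ^ N = \<pi> ^ (R mod N) * (\<pi> ^ (R div N) * y) ^ N" for R and y :: 'a
  proof -
    have "\<pi> ^ R = \<pi> ^ (R mod N) * (\<pi> ^ (R div N)) ^ N"
      by (metis mod_div_mult_eq power_add power_mult mult.commute)
    then show ?thesis by (simp add: power_mult_distrib mult.assoc)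
  qed
  define Y Y' where "Y = \<pi> ^ (R div N) * y" and "Y' = \<pi> ^ (R' div N) * y'"
  have YY': "Y \<noteq> 0" "Y' \<noteq> 0" using nz by (simp_all add: Y_def Y'_def)
  have eq': "\<pi> ^ (R mod N) * Y ^ N * u = \<pi> ^ (R' mod N) * Y' ^ N * u'"
    unfolding Y_def Y'_def reduce[symmetric] by (rule eq)
  have "v (\<pi> ^ (R mod N) * Y ^ N * u) = v (\<pi> ^ (R' mod N) * Y' ^ N * u')"
    using eq' by simp
  then have "v (\<pi> ^ (R mod N) * Y ^ N) = v (\<pi> ^ (R' mod N) * Y' ^ N)"
    using YY' nz units by simp
  then have same: "R mod N = R' mod N" "v (Y / Y') = 0"
    using residue_unique[of "R mod N" N "R' mod N" Y Y'] N(1) YY' by auto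
  have "Y ^ N * u = Y' ^ N * u'" using eq' same(1) by (simp add: mult.assoc)
  then have u': "u' = (Y / Y') ^ N * u" using YY' by (simp add: power_divide field_simps)
  have "cong_mod m ((Y / Y') ^ N) 1" using N(2) same(2) YY' by simp
  moreover have "cong_mod m u u" by (simp add: cong_mod_iff)
  ultimately have "cong_mod m ((Y / Y') ^ N * u) (1 * u)"
    using cong_mod_mult[of m "(Y / Y') ^ N" 1 u u] units by (simp add: in_val_ring)
  then show ?thesis using u' by simp
qed

text \<open>Existence of an angular component map modulo pi^m: send x = pi^r y^N u to u.\<close>
lemma ac_spec_exists: "\<exists>f. ac_spec v \<pi> m f"
proof -
  obtain N where N: "N > 0" "\<And>w. w \<noteq> 0 \<Longrightarrow> v w = 0 \<Longrightarrow> cong_mod m (w ^ N) 1"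
    using unit_power_cong_one[of m] by blast
  define unit_part where "unit_part x u \<longleftrightarrow> u \<noteq> 0 \<and> v u = 0 \<and> (\<exists>r y. y \<noteq> 0 \<and> x = \<pi> ^ r * y ^ N * u)"
    for x u
  define f where "f x = (if x = 0 then 1 else SOME u. unit_part x u)" for x
  have f_unit_part: "unit_part x (f x)" if x: "x \<noteq> 0" for x
  proof -
    obtain u where "unit_part x u" using unit_factorization[OF N(1) x] unfolding unit_part_def by blast
    then have "unit_part x (SOME u. unit_part x u)" by (rule someI)
    then show ?thesis using x by (simp add: f_def)
  qed
  have f_cong: "cong_mod m (f x) u"
    if x: "x = \<pi> ^ r * y ^ N * u" and nz: "y \<noteq> 0" "u \<noteq> 0" and unit: "v u = 0" for x r y u
  proof -
    obtain r' y' where "y' \<noteq> 0" "f x \<noteq> 0" "v (f x) = 0" "x = \<pi> ^ r' * y' ^ N * f x"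
      using f_unit_part[of x] x nz unfolding unit_part_def by auto
    then show ?thesis using unit_part_cong[OF N, of r y u r' y' "f x"] x nz unit by simp
  qed
  show ?thesis
    unfolding ac_spec_def
  proof (intro exI[of _ f] conjI allI impI)
    fix x :: 'a assume "x \<noteq> 0"
    then show "f x \<noteq> 0" "v (f x) = 0" using f_unit_part unfolding unit_part_def by blast+
  next
    fix x y :: 'a assume xy: "x \<noteq> 0" "y \<noteq> 0"
    obtain r1 y1 r2 y2 where fx: "y1 \<noteq> 0" "x = \<pi> ^ r1 * y1 ^ N * f x" "f x \<noteq> 0" "v (f x) = 0"
      and fy: "y2 \<noteq> 0" "y = \<pi> ^ r2 * y2 ^ N * f y" "f y \<noteq> 0" "v (f y) = 0"
      using f_unit_part[OF xy(1)] f_unit_part[OF xy(2)] unfolding unit_part_def by blast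
    have prod: "(\<pi> ^ r1 * y1 ^ N * a) * (\<pi> ^ r2 * y2 ^ N * b)
        = \<pi> ^ (r1 + r2) * (y1 * y2) ^ N * (a * b)" for a b
      by (simp add: power_add power_mult_distrib mult_ac)
    have "x * y = \<pi> ^ (r1 + r2) * (y1 * y2) ^ N * (f x * f y)"
      using prod[of "f x" "f y"] fx(2) fy(2) by simp
    then show "cong_mod m (f (x * y)) (f x * f y)"
      using f_cong[of "x * y" "r1 + r2" "y1 * y2" "f x * f y"] fx fy by simp
  next
    show "cong_mod m (f \<pi>) 1" using f_cong[of \<pi> 1 1 1] by simp
  next
    fix u assume "u \<noteq> 0" "v u = 0"
    then show "cong_mod m (f u) u" using f_cong[of u 0 1 u] by simp
  qed
qed

lemma ac_spec: "ac_spec v \<pi> m (ac v \<pi> m)"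
  unfolding ac_def using ac_spec_exists by (rule someI_ex)

end

text \<open>The values taken on the coset lam Q_{n,m} (lam \<noteq> 0) are exactly v lam + n G:
  every element of Q_{n,m} has value in n G, and, thanks to ac_m, every value in n G
  is attained.\<close>

context zgroup_valued_field begin

lemma Q_set_value: assumes "x \<in> Q_set v \<pi> n m" "0 < m"
  shows "x \<noteq> 0 \<and> (\<exists>y. y \<noteq> 0 \<and> v x = v (y ^ n))"
proof -
  obtain y z where yz: "x \<noteq> 0" "y \<noteq> 0" "z \<in> \<I> m" "x = y ^ n * (1 + z)"
    using assms by (auto simp: Q_set_def)
  have "v (1 + z) = 0"
  proof (cases "z = 0")
    case False
    then have "v (\<pi> ^ m) \<le> v z" using yz by (simp add: in_ideal_pow)
    then have "v 1 < v z" using v_pi_power_pos[of m] assms by simp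
    then show ?thesis using v_add_strict[of 1 z] False by simp
  qed simp
  moreover have "1 + z \<noteq> 0" using yz by auto
  ultimately show ?thesis using yz by (intro conjI exI[of _ y]) auto
qed

text \<open>Dividing y by its angular component gives an element y' of the same value
  with ac(y') = 1, so that y'^n lies in Q_{n,m}.\<close>
lemma Q_set_value_exists: assumes "y \<noteq> 0" shows "\<exists>x \<in> Q_set v \<pi> n m. v x = v (y ^ n)"
proof -
  define f where "f = ac v \<pi> m"
  have f_unit: "\<And>x. x \<noteq> 0 \<Longrightarrow> f x \<noteq> 0 \<and> v (f x) = 0"
   and f_mult: "\<And>x y. x \<noteq> 0 \<Longrightarrow> y \<noteq> 0 \<Longrightarrow> cong_mod m (f (x * y)) (f x * f y)"
   and f_on_units: "\<And>u. u \<noteq> 0 \<Longrightarrow> v u = 0 \<Longrightarrow> cong_mod m (f u) u"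
    using ac_spec[of m] unfolding ac_spec_def f_def by blast+
  define w where "w = f y"
  have w: "w \<noteq> 0" "v w = 0" using f_unit assms w_def by auto
  define y' where "y' = y / w"
  have y': "y' \<noteq> 0" "f y' \<noteq> 0" "v (f y') = 0" using assms w f_unit by (auto simp: y'_def)
  have "cong_mod m (f (y' * w)) (f y' * f w)" using f_mult y' w by simp
  moreover have "y' * w = y" using w by (simp add: y'_def)
  moreover have "cong_mod m (f y' * f w) (f y' * w)"
    using cong_mod_mult[of m "f y'" "f y'" "f w" w] f_on_units[OF w] y' f_unit[OF w(1)]
    by (simp add: val_ring_unit cong_mod_iff)
  ultimately have "cong_mod m (1 * w) (f y' * w)" using w_def cong_mod_trans by fastforce
  then have ac_y': "cong_mod m (f y') 1" using cong_mod_cancel w cong_mod_sym by blast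
  have ac_powers: "cong_mod m (f (y' ^ j)) 1" for j
  proof (induction j)
    case 0
    then show ?case using f_on_units[of 1] by simp
  next
    case (Suc j)
    have "cong_mod m (f (y' * y' ^ j)) (f y' * f (y' ^ j))" using f_mult y' by simp
    moreover have "cong_mod m (f y' * f (y' ^ j)) (1 * 1)"
      using cong_mod_mult[OF ac_y' Suc] f_unit[of "y' ^ j"] y' by (simp add: val_ring_unit)
    ultimately show ?case using cong_mod_trans by fastforce
  qed
  have "y' ^ n \<in> Q_set v \<pi> n m"
    unfolding Q_set_def using y' ac_powers[of n] f_def ideal_pow_zero[of m]
    by (intro CollectI conjI exI[of _ y'] exI[of _ 0]) simp_all
  moreover have "v (y' ^ n) = v (y ^ n)"
    using w assms v_power_zero[of w n] by (simp add: y'_def power_divide)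
  ultimately show ?thesis by blast
qed

lemma lamQ_value: assumes "s \<in> lamQ v \<pi> lam n m" "0 < m" "lam \<noteq> 0"
  shows "s \<noteq> 0 \<and> (\<exists>y. y \<noteq> 0 \<and> v s = v (lam * y ^ n))"
  using assms Q_set_value by (fastforce simp: lamQ_def)

lemma lamQ_value_exists: assumes "y \<noteq> 0" "lam \<noteq> 0"
  shows "\<exists>s \<in> lamQ v \<pi> lam n m. s \<noteq> 0 \<and> v s = v (lam * y ^ n)"
proof -
  obtain x where x: "x \<in> Q_set v \<pi> n m" "v x = v (y ^ n)" using Q_set_value_exists assms by blast
  then have "x \<noteq> 0" by (simp add: Q_set_def)
  moreover have "lam * x \<in> lamQ v \<pi> lam n m" using x(1) unfolding lamQ_def by (rule imageI)
  ultimately show ?thesis using x assms by (intro bexI[of _ "lam * x"]) auto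
qed

lemma lamQ_zero: "lamQ v \<pi> 0 n m = {0}"
  using Q_set_value_exists[of 1] by (auto simp: lamQ_def)

lemma nth_power_value_above: assumes "a \<noteq> 0" "0 < n" shows "\<exists>y. y \<noteq> 0 \<and> v a < v (y ^ n)"
proof (cases "v a < 0")
  case True
  then show ?thesis by (intro exI[of _ 1]) simp
next
  case False
  then have pos: "0 < v (\<pi> * a)" "v a < v (\<pi> * a)" using assms v_pi_pos by (simp_all add: add_pos_nonneg)
  have le: "v (\<pi> * a) \<le> v ((\<pi> * a) ^ n)"
  proof -
    obtain j where "n = Suc j" using assms(2) by (cases n) auto
    then show ?thesis using pos assms v_power_nonneg[of "\<pi> * a" j] by simp
  qed
  have "v a < v ((\<pi> * a) ^ n)" using less_le_trans[OF pos(2) le] .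
  then show ?thesis using assms by (intro exI[of _ "\<pi> * a"]) simp
qed

lemma nth_power_value_below: assumes "a \<noteq> 0" "0 < n" shows "\<exists>y. y \<noteq> 0 \<and> v (y ^ n) < v a"
proof -
  obtain y where "y \<noteq> 0" "v (inverse a) < v (y ^ n)"
    using nth_power_value_above[of "inverse a" n] assms by auto
  then show ?thesis using assms by (intro exI[of _ "inverse y"]) (simp add: power_inverse minus_less_iff)
qed

lemma lamQ_above: assumes "A \<noteq> 0" "lam \<noteq> 0" "0 < n" shows "\<exists>s\<in>lamQ v \<pi> lam n m. ord_less v A s"
proof -
  obtain y where y: "y \<noteq> 0" "v (A / lam) < v (y ^ n)"
    using nth_power_value_above[of "A / lam" n] assms by auto
  obtain s where s: "s \<in> lamQ v \<pi> lam n m" "s \<noteq> 0" "v s = v (lam * y ^ n)"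
    using lamQ_value_exists[OF y(1) assms(2)] by blast
  have "v A < v s" using y s assms by (simp add: diff_less_eq add.commute)
  then have "ord_less v A s" using s(2) assms(1) by (simp add: ord_less_def)
  then show ?thesis using s(1) by blast
qed

lemma lamQ_below: assumes "lam \<noteq> 0" "0 < n" shows "\<exists>s\<in>lamQ v \<pi> lam n m. ord_less v s B"
proof (cases "B = 0")
  case True
  obtain s where "s \<in> lamQ v \<pi> lam n m" "s \<noteq> 0"
    using lamQ_value_exists[of 1 lam n m] assms by auto
  then show ?thesis using True by (auto simp: ord_less_def)
next
  case False
  obtain y where y: "y \<noteq> 0" "v (y ^ n) < v (B / lam)"
    using nth_power_value_below[of "B / lam" n] False assms by auto
  obtain s where s: "s \<in> lamQ v \<pi> lam n m" "s \<noteq> 0" "v s = v (lam * y ^ n)"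
    using lamQ_value_exists[OF y(1) assms(1)] by blast
  have "v s < v B" using y s assms False by (simp add: less_diff_eq add.commute)
  then show ?thesis using s by (auto simp: ord_less_def)
qed

lemma lamQ_meets_unbounded_interval:
  assumes "0 < n" "\<not> (box1 \<and> box2 \<and> lam \<noteq> 0)"
  shows "(\<exists>s\<in>lamQ v \<pi> lam n m. (box1 \<longrightarrow> ord_less v A s) \<and> (box2 \<longrightarrow> ord_less v s B))
         \<longleftrightarrow> (box2 \<longrightarrow> lam \<noteq> 0) \<and> (box1 \<longrightarrow> A \<noteq> 0)"
proof (cases "lam = 0")
  case True
  then show ?thesis by (auto simp: lamQ_zero ord_less_def)
next
  case False
  show ?thesis
  proof (cases box1)
    case True
    then have "\<not> box2" using assms False by simp
    then show ?thesis using lamQ_above[of A lam n m] True False assms by (auto simp: ord_less_def)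
  next
    case False
    then show ?thesis using lamQ_below[of lam n m B] \<open>lam \<noteq> 0\<close> assms by auto
  qed
qed

lemma nth_power_value_nonneg:
  assumes "u \<noteq> 0" "d \<le> n" "0 < v (\<pi> ^ d) + v (u ^ n)" shows "0 \<le> v (u ^ n)"
proof (rule ccontr)
  assume "\<not> 0 \<le> v (u ^ n)"
  then have "v u < 0" using v_power_nonneg[of u n] assms by (metis not_le)
  then have "v u \<le> v (inverse \<pi>)" using v_pi_least[of "inverse u"] assms by (simp add: le_minus_iff)
  then have u_le: "v (u ^ n) \<le> - v (\<pi> ^ n)"
    using v_power_mono[of u "inverse \<pi>" n] assms by (simp add: power_inverse)
  have pi_le: "v (\<pi> ^ d) \<le> v (\<pi> ^ n)" using v_pi_power_less[of d n] assms by (cases "d = n") auto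
  have "v (\<pi> ^ d) + v (u ^ n) \<le> v (\<pi> ^ n) + - v (\<pi> ^ n)" using add_mono[OF pi_le u_le] .
  then show False using assms(3) by simp
qed

text \<open>If v lam \<equiv> r and v A \<equiv> l (mod n), and 0 < d \<le> n with l + d \<equiv> r (mod n), then
  v A + d v pi is the least value of lam Q_{n,m} above v A: it is attained, and
  every larger value of lam Q_{n,m} is at least as large.\<close>
lemma lamQ_least_value_above:
  assumes m: "0 < m" and lam: "lam \<noteq> 0" and r: "y0 \<noteq> 0" "v lam = v (\<pi> ^ r * y0 ^ n)"
    and A: "A \<noteq> 0" "y1 \<noteq> 0" "v A = v (\<pi> ^ l * y1 ^ n)"
    and d: "l + d = r + n * j" "0 < d" "d \<le> n"
  shows "\<And>s. s \<in> lamQ v \<pi> lam n m \<Longrightarrow> v A < v s \<Longrightarrow> v A + v (\<pi> ^ d) \<le> v s"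
    and "\<exists>s\<in>lamQ v \<pi> lam n m. s \<noteq> 0 \<and> v s = v A + v (\<pi> ^ d)"
proof -
  have shift: "\<pi> ^ l * y1 ^ n * \<pi> ^ d = \<pi> ^ r * (\<pi> ^ j * y1) ^ n"
    using d(1) by (simp add: power_mult_distrib algebra_simps flip: power_add power_mult)
  have v_lam_power: "v (lam * z ^ n) = v A + v (\<pi> ^ d) + v ((y0 * z / (\<pi> ^ j * y1)) ^ n)"
    if z: "z \<noteq> 0" for z
  proof -
    have "v (lam * z ^ n) = v (\<pi> ^ r * (y0 * z) ^ n)"
      using lam z r by (simp add: power_mult_distrib add.assoc)
    also have "\<pi> ^ r * (y0 * z) ^ n = \<pi> ^ r * (\<pi> ^ j * y1) ^ n * (y0 * z / (\<pi> ^ j * y1)) ^ n"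
      using A by (simp add: power_divide field_simps)
    also have "v \<dots> = v (\<pi> ^ l * y1 ^ n * \<pi> ^ d) + v ((y0 * z / (\<pi> ^ j * y1)) ^ n)"
      using A r z shift by simp
    finally show ?thesis using A by simp
  qed
  show "v A + v (\<pi> ^ d) \<le> v s" if s: "s \<in> lamQ v \<pi> lam n m" "v A < v s" for s
  proof -
    obtain z where z: "z \<noteq> 0" "v s = v (lam * z ^ n)" using lamQ_value[OF s(1) m lam] by blast
    define u where "u = y0 * z / (\<pi> ^ j * y1)"
    have u: "u \<noteq> 0" "v s = v A + (v (\<pi> ^ d) + v (u ^ n))"
      using v_lam_power[OF z(1)] z r A by (simp_all add: u_def add.assoc)
    then have "0 < v (\<pi> ^ d) + v (u ^ n)" using s(2) by simp
    then have "0 \<le> v (u ^ n)" using nth_power_value_nonneg u d by blast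
    then show ?thesis using u by (simp add: add_increasing2)
  qed
  define z where "z = \<pi> ^ j * y1 / y0"
  have z: "z \<noteq> 0" "y0 * z / (\<pi> ^ j * y1) = 1" using A r by (simp_all add: z_def)
  obtain s where "s \<in> lamQ v \<pi> lam n m" "s \<noteq> 0" "v s = v (lam * z ^ n)"
    using lamQ_value_exists[OF z(1) lam] by blast
  then show "\<exists>s\<in>lamQ v \<pi> lam n m. s \<noteq> 0 \<and> v s = v A + v (\<pi> ^ d)"
    using v_lam_power[OF z(1)] z(2) by auto
qed

lemma lamQ_meets_interval:
  assumes n: "0 < n" and m: "0 < m" and lam: "lam \<noteq> 0"
    and r: "r < n" "y0 \<noteq> 0" "v lam = v (\<pi> ^ r * y0 ^ n)"
    and l: "l < n" and A: "A \<noteq> 0" "y1 \<noteq> 0" "v A = v (\<pi> ^ l * y1 ^ n)"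
  shows "(\<exists>s\<in>lamQ v \<pi> lam n m. ord_less v A s \<and> ord_less v s B)
         \<longleftrightarrow> ord_less v A (\<pi> powi (- int (if l < r then r - l else r + n - l)) * B)"
proof -
  define d where "d = (if l < r then r - l else r + n - l)"
  define j :: nat where "j = (if l < r then 0 else 1)"
  have dj: "l + d = r + n * j" "0 < d" "d \<le> n" using r l by (auto simp: d_def j_def)
  note least = lamQ_least_value_above[OF m lam r(2,3) A dj]
  have "\<pi> powi (- int d) * B = B / \<pi> ^ d"
    by (simp add: power_int_minus divide_inverse mult.commute)
  then have shifted: "ord_less v A (\<pi> powi (- int d) * B) \<longleftrightarrow> B = 0 \<or> v A + v (\<pi> ^ d) < v B"
    using A(1) by (cases "B = 0") (auto simp: ord_less_def less_diff_eq)
  show ?thesis unfolding d_def[symmetric] shifted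
  proof
    assume "\<exists>s\<in>lamQ v \<pi> lam n m. ord_less v A s \<and> ord_less v s B"
    then obtain s where s: "s \<in> lamQ v \<pi> lam n m" "ord_less v A s" "ord_less v s B" by blast
    have "s \<noteq> 0" using lamQ_value[OF s(1) m lam] by blast
    then have "v A + v (\<pi> ^ d) \<le> v s" using least(1)[OF s(1)] s(2) by (simp add: ord_less_def)
    then show "B = 0 \<or> v A + v (\<pi> ^ d) < v B" using s(3) by (auto simp: ord_less_def)
  next
    assume B: "B = 0 \<or> v A + v (\<pi> ^ d) < v B"
    obtain s where s: "s \<in> lamQ v \<pi> lam n m" "s \<noteq> 0" "v s = v A + v (\<pi> ^ d)"
      using least(2) by blast
    have "ord_less v A s \<and> ord_less v s B"
      using A(1) s(2,3) B v_pi_power_pos[OF dj(2)] by (auto simp: ord_less_def)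
    then show "\<exists>s\<in>lamQ v \<pi> lam n m. ord_less v A s \<and> ord_less v s B" using s(1) by blast
  qed
qed

end

lemma bool_comb_subset: "S \<in> bool_comb U A \<Longrightarrow> (\<forall>X\<in>A. X \<subseteq> U) \<Longrightarrow> S \<subseteq> U"
  by (induction rule: bool_comb.induct) auto

lemma precell_subset: "precell v \<pi> Rs Fs \<Delta> k S \<Longrightarrow> S \<subseteq> {x. length x = k}"
  unfolding precell_def by (erule bool_comb_subset) (auto simp: precell_atoms_def)

lemma precell_Int:
  "precell v \<pi> Rs Fs \<Delta> k S \<Longrightarrow> precell v \<pi> Rs Fs \<Delta> k T \<Longrightarrow> precell v \<pi> Rs Fs \<Delta> k (S \<inter> T)"
  unfolding precell_def by (rule bool_comb.inter)

lemma precell_top: "precell v \<pi> Rs Fs \<Delta> k {x. length x = k}"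
  unfolding precell_def by (rule bool_comb.top)

lemma precell_empty: "precell v \<pi> Rs Fs \<Delta> k {}"
  using bool_comb.compl[OF bool_comb.top] unfolding precell_def by simp

lemma precell_ord_less:
  "a1 \<in> \<Delta> k \<Longrightarrow> a2 \<in> \<Delta> k \<Longrightarrow>
   precell v \<pi> Rs Fs \<Delta> k {x. length x = k \<and> ord_less v (a1 x) (\<pi> powi l * a2 x)}"
  unfolding precell_def by (rule bool_comb.atom) (auto simp: precell_atoms_def)

lemma (in valued_field) precell_nonzero:
  assumes "a \<in> \<Delta> k" shows "precell v \<pi> Rs Fs \<Delta> k {x. length x = k \<and> a x \<noteq> 0}"
proof -
  have "ord_less v (a x) (\<pi> powi 1 * a x) \<longleftrightarrow> a x \<noteq> 0" for x
    using v_pi_pos by (auto simp: ord_less_def)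
  then show ?thesis using precell_ord_less[of a \<Delta> k a v \<pi> Rs Fs 1] assms by simp
qed

lemma finite_precell_partition_precell:
  "precell v \<pi> Rs Fs \<Delta> k S \<Longrightarrow> finite_precell_partition v \<pi> Rs Fs \<Delta> k S"
  unfolding finite_precell_partition_def by (intro exI[of _ "{S}"]) auto

lemma finite_precell_partition_UN_Int:
  assumes I: "finite I" and S: "\<And>i. i \<in> I \<Longrightarrow> finite_precell_partition v \<pi> Rs Fs \<Delta> k (S i)"
    and disj: "\<And>i j. i \<in> I \<Longrightarrow> j \<in> I \<Longrightarrow> i \<noteq> j \<Longrightarrow> S i \<inter> S j = {}" and W: "\<And>i. i \<in> I \<Longrightarrow> precell v \<pi> Rs Fs \<Delta> k (W i)"
  shows "finite_precell_partition v \<pi> Rs Fs \<Delta> k (\<Union>i\<in>I. S i \<inter> W i)"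
proof -
  obtain PS where PS: "\<And>i. i \<in> I \<Longrightarrow> finite (PS i)"
    "\<And>i P. i \<in> I \<Longrightarrow> P \<in> PS i \<Longrightarrow> precell v \<pi> Rs Fs \<Delta> k P"
    "\<And>i. i \<in> I \<Longrightarrow> pairwise disjnt (PS i)" "\<And>i. i \<in> I \<Longrightarrow> \<Union>(PS i) = S i"
    using S unfolding finite_precell_partition_def by metis
  define Ps where "Ps = (\<Union>i\<in>I. (\<lambda>P. P \<inter> W i) ` PS i)"
  have "finite Ps" using I PS(1) by (simp add: Ps_def)
  moreover have "\<forall>X\<in>Ps. precell v \<pi> Rs Fs \<Delta> k X"
    using PS(2) W by (auto simp: Ps_def intro!: precell_Int)
  moreover have "pairwise disjnt Ps"
  proof (rule pairwiseI)
    fix X Y assume XY: "X \<in> Ps" "Y \<in> Ps" "X \<noteq> Y"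
    then obtain i P j Q where ij: "i \<in> I" "P \<in> PS i" "X = P \<inter> W i" "j \<in> I" "Q \<in> PS j" "Y = Q \<inter> W j"
      by (auto simp: Ps_def)
    show "disjnt X Y"
    proof (cases "i = j")
      case True
      then have "disjnt P Q" using PS(3)[of i] ij XY by (auto simp: pairwise_def)
      then show ?thesis using ij by (auto simp: disjnt_def)
    next
      case False
      have "P \<subseteq> S i" "Q \<subseteq> S j" using PS(4) ij by blast+
      then show ?thesis using disj[of i j] False ij by (auto simp: disjnt_def)
    qed
  qed
  moreover have "\<Union>Ps = (\<Union>i\<in>I. \<Union>(PS i) \<inter> W i)" by (auto simp: Ps_def)
  then have "\<Union>Ps = (\<Union>i\<in>I. S i \<inter> W i)" using PS(4) by simp
  ultimately show ?thesis unfolding finite_precell_partition_def by blast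
qed

lemma cell_projection:
  assumes "D \<subseteq> {x. length x = k}"
  shows "{x. length x = k \<and> (\<exists>t. x @ [t] \<in> cell_set v \<pi> k D a1 box1 c box2 a2 lam n m)}
       = {x \<in> D. \<exists>s\<in>lamQ v \<pi> lam n m. (box1 \<longrightarrow> ord_less v (a1 x) s) \<and> (box2 \<longrightarrow> ord_less v s (a2 x))}"
proof (intro set_eqI iffI)
  fix x assume "x \<in> {x. length x = k \<and> (\<exists>t. x @ [t] \<in> cell_set v \<pi> k D a1 box1 c box2 a2 lam n m)}"
  then obtain t where "x \<in> D" "box1 \<longrightarrow> ord_less v (a1 x) (t - c x)"
      "box2 \<longrightarrow> ord_less v (t - c x) (a2 x)" "t - c x \<in> lamQ v \<pi> lam n m"
    by (auto simp: cell_set_def)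
  then show "x \<in> {x \<in> D. \<exists>s\<in>lamQ v \<pi> lam n m. (box1 \<longrightarrow> ord_less v (a1 x) s) \<and> (box2 \<longrightarrow> ord_less v s (a2 x))}"
    by blast
next
  fix x assume "x \<in> {x \<in> D. \<exists>s\<in>lamQ v \<pi> lam n m. (box1 \<longrightarrow> ord_less v (a1 x) s) \<and> (box2 \<longrightarrow> ord_less v s (a2 x))}"
  then obtain s where "x \<in> D" "s \<in> lamQ v \<pi> lam n m"
      "box1 \<longrightarrow> ord_less v (a1 x) s" "box2 \<longrightarrow> ord_less v s (a2 x)"
    by blast
  then have "x @ [s + c x] \<in> cell_set v \<pi> k D a1 box1 c box2 a2 lam n m"
    using assms unfolding cell_set_def by auto
  then show "x \<in> {x. length x = k \<and> (\<exists>t. x @ [t] \<in> cell_set v \<pi> k D a1 box1 c box2 a2 lam n m)}"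
    using assms \<open>x \<in> D\<close> by auto
qed

definition value_class ::
  "('a::field \<Rightarrow> 'g::linordered_ab_group_add) \<Rightarrow> 'a \<Rightarrow> nat \<Rightarrow> nat \<Rightarrow> ('a list \<Rightarrow> 'a) \<Rightarrow> nat \<Rightarrow> 'a list set"
  where "value_class v \<pi> k n a l =
    {x. length x = k \<and> a x \<noteq> 0 \<and> (\<exists>y. y \<noteq> 0 \<and> v (a x) = v (\<pi> ^ l * y ^ n))}"

context zgroup_valued_field begin

lemma value_class_disjoint:
  assumes "l < n" "l' < n" "l \<noteq> l'"
  shows "value_class v \<pi> k n a l \<inter> value_class v \<pi> k n a l' = {}"
  unfolding value_class_def using residue_unique[of l n l'] assms by fastforce

lemma value_class_cover:
  assumes "0 < n" "length x = k" "a x \<noteq> 0" shows "\<exists>l<n. x \<in> value_class v \<pi> k n a l"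
proof -
  obtain l y where "l < n" "y \<noteq> 0" "v (a x) = v (\<pi> ^ l * y ^ n)"
    using zgroup[OF assms(1,3)] by blast
  then show ?thesis using assms unfolding value_class_def by blast
qed

lemma projection_partition_unbounded:
  assumes D: "precell v \<pi> Rs Fs \<Delta> k D" and a1: "a1 \<in> \<Delta> k" and n: "0 < n"
    and unbounded: "\<not> (box1 \<and> box2 \<and> lam \<noteq> 0)"
  shows "finite_precell_partition v \<pi> Rs Fs \<Delta> k
    {x \<in> D. \<exists>s\<in>lamQ v \<pi> lam n m. (box1 \<longrightarrow> ord_less v (a1 x) s) \<and> (box2 \<longrightarrow> ord_less v s (a2 x))}"
proof -
  define X where "X = {x. length x = k \<and> (box2 \<longrightarrow> lam \<noteq> 0) \<and> (box1 \<longrightarrow> a1 x \<noteq> 0)}"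
  have X: "precell v \<pi> Rs Fs \<Delta> k X"
  proof (cases "box2 \<longrightarrow> lam \<noteq> 0")
    case True
    then show ?thesis
      using precell_nonzero[of a1 \<Delta> k Rs Fs] a1 precell_top by (cases box1) (simp_all add: X_def)
  qed (simp add: X_def precell_empty)
  have "{x \<in> D. \<exists>s\<in>lamQ v \<pi> lam n m. (box1 \<longrightarrow> ord_less v (a1 x) s) \<and> (box2 \<longrightarrow> ord_less v s (a2 x))}
      = D \<inter> X"
    using lamQ_meets_unbounded_interval[OF n unbounded] precell_subset[OF D] by (auto simp: X_def)
  then show ?thesis using finite_precell_partition_precell[OF precell_Int[OF D X]] by simp
qed

text \<open>With both bounds and lam \<noteq> 0, the projection splits along the residue l of
  ord a1 modulo n; on each residue class it is cut out by the precell condition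
  ord a1 < ord a2 - d(l) of the two-sided lemma.\<close>
lemma projection_partition_bounded:
  assumes D: "precell v \<pi> Rs Fs \<Delta> k D" and a1: "a1 \<in> \<Delta> k" and a2: "a2 \<in> \<Delta> k"
    and nm: "0 < n" "0 < m" and lam: "lam \<noteq> 0"
    and classes: "\<And>l. finite_precell_partition v \<pi> Rs Fs \<Delta> k (value_class v \<pi> k n a1 l)"
  shows "finite_precell_partition v \<pi> Rs Fs \<Delta> k
    {x \<in> D. \<exists>s\<in>lamQ v \<pi> lam n m. ord_less v (a1 x) s \<and> ord_less v s (a2 x)}"
proof -
  let ?S = "value_class v \<pi> k n a1"
  obtain r y0 where r: "r < n" "y0 \<noteq> 0" "v lam = v (\<pi> ^ r * y0 ^ n)"
    using zgroup[OF nm(1) lam] by blast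
  define d where "d l = (if l < r then r - l else r + n - l)" for l :: nat
  define W where "W l = D \<inter> {x. length x = k \<and> ord_less v (a1 x) (\<pi> powi (- int (d l)) * a2 x)}" for l
  have W_precell: "precell v \<pi> Rs Fs \<Delta> k (W l)" for l
    unfolding W_def using precell_Int[OF D precell_ord_less[of a1 \<Delta> k a2 v \<pi> Rs Fs "- int (d l)"]] a1 a2
    by simp
  have fibre: "(\<exists>s\<in>lamQ v \<pi> lam n m. ord_less v (a1 x) s \<and> ord_less v s (a2 x))
      \<longleftrightarrow> ord_less v (a1 x) (\<pi> powi (- int (d l)) * a2 x)" if "x \<in> ?S l" "l < n" for x l
  proof -
    obtain y where "a1 x \<noteq> 0" "y \<noteq> 0" "v (a1 x) = v (\<pi> ^ l * y ^ n)"
      using \<open>x \<in> ?S l\<close> by (auto simp: value_class_def)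
    then show ?thesis unfolding d_def by (rule lamQ_meets_interval[OF nm lam r \<open>l < n\<close>])
  qed
  have "{x \<in> D. \<exists>s\<in>lamQ v \<pi> lam n m. ord_less v (a1 x) s \<and> ord_less v s (a2 x)}
      = (\<Union>l\<in>{..<n}. ?S l \<inter> W l)"
  proof (intro set_eqI iffI)
    fix x assume x: "x \<in> {x \<in> D. \<exists>s\<in>lamQ v \<pi> lam n m. ord_less v (a1 x) s \<and> ord_less v s (a2 x)}"
    then have "length x = k" "a1 x \<noteq> 0" using precell_subset[OF D] by (auto simp: ord_less_def)
    then obtain l where "l < n" "x \<in> ?S l" using value_class_cover[OF nm(1)] by blast
    then show "x \<in> (\<Union>l\<in>{..<n}. ?S l \<inter> W l)"
      using x fibre \<open>length x = k\<close> by (auto simp: W_def)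
  next
    fix x assume "x \<in> (\<Union>l\<in>{..<n}. ?S l \<inter> W l)"
    then show "x \<in> {x \<in> D. \<exists>s\<in>lamQ v \<pi> lam n m. ord_less v (a1 x) s \<and> ord_less v s (a2 x)}"
      using fibre by (auto simp: W_def)
  qed
  moreover have "finite_precell_partition v \<pi> Rs Fs \<Delta> k (\<Union>l\<in>{..<n}. ?S l \<inter> W l)"
    using classes value_class_disjoint W_precell by (intro finite_precell_partition_UN_Int) simp_all
  ultimately show ?thesis by simp
qed

end

theorem lemma2p2:
  fixes v :: "'a::field \<Rightarrow> 'g::linordered_ab_group_add"
    and \<pi> :: 'a and q :: nat
    and Rs :: "('a list \<Rightarrow> bool) set" and Fs :: "('a list \<Rightarrow> 'a) set"
    and \<Delta> :: "nat \<Rightarrow> ('a list \<Rightarrow> 'a) set"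
    and k n m :: nat and D :: "'a list set"
    and a1 a2 c :: "'a list \<Rightarrow> 'a" and box1 box2 :: bool and lam :: 'a
  assumes K: "FqZ_field q v \<pi>"
    and L: "expands_base v \<pi> Rs"
    and Delta: "\<forall>j. \<forall>f\<in>\<Delta> j. order_definable v Rs Fs j f"
    and D: "precell v \<pi> Rs Fs \<Delta> k D"
    and a1: "a1 \<in> \<Delta> k" and a2: "a2 \<in> \<Delta> k"
    and c: "qf_def_fun Rs Fs k c"
    and nm: "0 < n" "0 < m"
    and hyp: "\<forall>l::nat. finite_precell_partition v \<pi> Rs Fs \<Delta> k
               {x. length x = k \<and> a1 x \<noteq> 0 \<and> (\<exists>y. y \<noteq> 0 \<and> v (a1 x) = v (\<pi> ^ l * y ^ n))}"
  shows "finite_precell_partition v \<pi> Rs Fs \<Delta> k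
           {x. length x = k \<and> (\<exists>t. x @ [t] \<in> cell_set v \<pi> k D a1 box1 c box2 a2 lam n m)}"
proof -
  interpret zgroup_valued_field v \<pi>
    using K unfolding FqZ_field_def zgroup_valued_field_def valued_field_def zgroup_valued_field_axioms_def
    by auto
  have classes: "finite_precell_partition v \<pi> Rs Fs \<Delta> k (value_class v \<pi> k n a1 l)" for l
    using hyp unfolding value_class_def by blast
  note projection = cell_projection[OF precell_subset[OF D], of v \<pi> a1 box1 c box2 a2 lam n m]
  show ?thesis
  proof (cases "box1 \<and> box2 \<and> lam \<noteq> 0")
    case True
    then show ?thesis
      unfolding projection using projection_partition_bounded[OF D a1 a2 nm _ classes] by simp
  next
    case False
    then show ?thesis
      unfolding projection by (rule projection_partition_unbounded[OF D a1 nm(1)])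
  qed
qed

end
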